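(* Let $q\neq 0$ and let $\gamma\colon I\to M^3$ be a curve parametrized by arc-length which is not a geodesic. (1) If $M^3=\mathbb R^3$ and $\gamma$ is a conformal trajectory of the radial vector field $V(x,y,z)=x\partial_x+y\partial_y+z\partial_z$, then the curvature of $\gamma$ is constant and its torsion is $\tau(s)=q\langle\gamma(s),\gamma'(s)\rangle$. (2) If $M^3=\mathbb S^3$, $\vec a\in\mathbb R^4\setminus\{0\}$ and $\gamma$ is a conformal trajectory of $V(p)=\vec a-\langle\vec a,p\rangle p$, then the curvature of $\gamma$ is constant and its torsion is $\tau(s)=q\langle\vec a,\gamma'(s)\rangle$. (3) If $M^3=\mathbb H^3$, $\vec a\in\mathbb R^4\setminus\{0\}$ and $\gamma$ is a conformal trajectory of $V(p)=\vec a+\langle\vec a,p\rangle p$, then the curvature of $\gamma$ is constant and its torsion is $\tau(s)=q\langle\vec a,\gamma'(s)\rangle$.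
   Context: $\mathbb R^3$ carries the Euclidean metric and the usual cross product. $\mathbb S^3=\{p\in\mathbb R^4:|p|=1\}$ with the induced Euclidean metric; $\mathbb H^3=\{p\in\mathbb R^4:\langle p,p\rangle=-1,\ t>0\}$ where $\langle\cdot,\cdot\rangle=dx^2+dy^2+dz^2-dt^2$ is the Lorentzian metric on $\mathbb R^4$ (in case (3) all inner products, including $\langle\vec a,\cdot\rangle$, are Lorentzian). In $\mathbb S^3$ and $\mathbb H^3$ the cross product of $u,v\in T_pM^3$ is the unique $u\times v\in T_pM^3$ with $\langle u\times v,w\rangle=\det(u,v,w,p)$ for all $w\in T_pM^3$ (determinant of the $4\times4$ matrix with these columns). The given fields $V$ are conformal vector fields. For a fixed real $q\neq0$, a conformal trajectory of $V$ is a regular curve with $\nabla_{\gamma'}\gamma'=q\,V\times\gamma'$, $\nabla$ the Levi-Civita connection of $M^3$. Frenet frame of a non-geodesic unit-speed curve: $T=\gamma'$, $\nabla_TT=\kappa N$ with $\kappa>0$, $B=T\times N$, $\nabla_TN=-\kappa T+\tau B$, $\nabla_TB=-\tau N$; $\kappa$ is the curvature and $\tau$ the torsion. *)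

theory Defs
  imports "HOL-Analysis.Analysis"
begin

text \<open>Points of R^4 are written (x,y,z,t) = (p$1, p$2, p$3, p$4).\<close>

definition lor :: "real^4 \<Rightarrow> real^4 \<Rightarrow> real" where
  "lor u v = u$1 * v$1 + u$2 * v$2 + u$3 * v$3 - u$4 * v$4"

definition S3 :: "(real^4) set" where
  "S3 = {p. norm p = 1}"

definition H3 :: "(real^4) set" where
  "H3 = {p. lor p p = -1 \<and> p$4 > 0}"

definition det4 :: "real^4 \<Rightarrow> real^4 \<Rightarrow> real^4 \<Rightarrow> real^4 \<Rightarrow> real" where
  "det4 u v w p = det ((\<chi> i j. if j = 1 then u$i else if j = 2 then v$i
                                 else if j = 3 then w$i else p$i) :: real^4^4)"

definition crossS :: "real^4 \<Rightarrow> real^4 \<Rightarrow> real^4 \<Rightarrow> real^4" where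
  "crossS p u v = (THE x. x \<bullet> p = 0 \<and> (\<forall>w. w \<bullet> p = 0 \<longrightarrow> x \<bullet> w = det4 u v w p))"

definition crossH :: "real^4 \<Rightarrow> real^4 \<Rightarrow> real^4 \<Rightarrow> real^4" where
  "crossH p u v = (THE x. lor x p = 0 \<and> (\<forall>w. lor w p = 0 \<longrightarrow> lor x w = det4 u v w p))"

definition smooth_curve_on :: "real set \<Rightarrow> (real \<Rightarrow> 'a::real_normed_vector) \<Rightarrow> bool" where
  "smooth_curve_on I \<gamma> \<longleftrightarrow> (\<exists>D. D 0 = \<gamma> \<and>
     (\<forall>n. \<forall>s\<in>I. (D n has_vector_derivative D (Suc n) s) (at s)))"

definition tang :: "(real \<Rightarrow> 'a::real_normed_vector) \<Rightarrow> real \<Rightarrow> 'a" where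
  "tang \<gamma> s = vector_derivative \<gamma> (at s)"

text \<open>Levi-Civita covariant derivative along the curve gamma of a vector field X along gamma
  (tangential projection of the ambient derivative, Gauss formula).\<close>
definition covD_R3 :: "(real \<Rightarrow> real^3) \<Rightarrow> real \<Rightarrow> real^3" where
  "covD_R3 X s = vector_derivative X (at s)"

definition covD_S3 :: "(real \<Rightarrow> real^4) \<Rightarrow> (real \<Rightarrow> real^4) \<Rightarrow> real \<Rightarrow> real^4" where
  "covD_S3 \<gamma> X s = (let D = vector_derivative X (at s) in D - (D \<bullet> \<gamma> s) *\<^sub>R \<gamma> s)"

definition covD_H3 :: "(real \<Rightarrow> real^4) \<Rightarrow> (real \<Rightarrow> real^4) \<Rightarrow> real \<Rightarrow> real^4" where
  "covD_H3 \<gamma> X s = (let D = vector_derivative X (at s) in D + lor D (\<gamma> s) *\<^sub>R \<gamma> s)"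

definition curv_R3 :: "(real \<Rightarrow> real^3) \<Rightarrow> real \<Rightarrow> real" where
  "curv_R3 \<gamma> s = norm (covD_R3 (tang \<gamma>) s)"

definition normal_R3 :: "(real \<Rightarrow> real^3) \<Rightarrow> real \<Rightarrow> real^3" where
  "normal_R3 \<gamma> s = (1 / curv_R3 \<gamma> s) *\<^sub>R covD_R3 (tang \<gamma>) s"

definition binormal_R3 :: "(real \<Rightarrow> real^3) \<Rightarrow> real \<Rightarrow> real^3" where
  "binormal_R3 \<gamma> s = cross3 (tang \<gamma> s) (normal_R3 \<gamma> s)"

definition tors_R3 :: "(real \<Rightarrow> real^3) \<Rightarrow> real \<Rightarrow> real" where
  "tors_R3 \<gamma> s = covD_R3 (normal_R3 \<gamma>) s \<bullet> binormal_R3 \<gamma> s"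

definition curv_S3 :: "(real \<Rightarrow> real^4) \<Rightarrow> real \<Rightarrow> real" where
  "curv_S3 \<gamma> s = norm (covD_S3 \<gamma> (tang \<gamma>) s)"

definition normal_S3 :: "(real \<Rightarrow> real^4) \<Rightarrow> real \<Rightarrow> real^4" where
  "normal_S3 \<gamma> s = (1 / curv_S3 \<gamma> s) *\<^sub>R covD_S3 \<gamma> (tang \<gamma>) s"

definition binormal_S3 :: "(real \<Rightarrow> real^4) \<Rightarrow> real \<Rightarrow> real^4" where
  "binormal_S3 \<gamma> s = crossS (\<gamma> s) (tang \<gamma> s) (normal_S3 \<gamma> s)"

definition tors_S3 :: "(real \<Rightarrow> real^4) \<Rightarrow> real \<Rightarrow> real" where
  "tors_S3 \<gamma> s = covD_S3 \<gamma> (normal_S3 \<gamma>) s \<bullet> binormal_S3 \<gamma> s"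

definition curv_H3 :: "(real \<Rightarrow> real^4) \<Rightarrow> real \<Rightarrow> real" where
  "curv_H3 \<gamma> s = sqrt (lor (covD_H3 \<gamma> (tang \<gamma>) s) (covD_H3 \<gamma> (tang \<gamma>) s))"

definition normal_H3 :: "(real \<Rightarrow> real^4) \<Rightarrow> real \<Rightarrow> real^4" where
  "normal_H3 \<gamma> s = (1 / curv_H3 \<gamma> s) *\<^sub>R covD_H3 \<gamma> (tang \<gamma>) s"

definition binormal_H3 :: "(real \<Rightarrow> real^4) \<Rightarrow> real \<Rightarrow> real^4" where
  "binormal_H3 \<gamma> s = crossH (\<gamma> s) (tang \<gamma> s) (normal_H3 \<gamma> s)"

definition tors_H3 :: "(real \<Rightarrow> real^4) \<Rightarrow> real \<Rightarrow> real" where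
  "tors_H3 \<gamma> s = lor (covD_H3 \<gamma> (normal_H3 \<gamma>) s) (binormal_H3 \<gamma> s)"

definition unit_speed_R3 :: "real set \<Rightarrow> (real \<Rightarrow> real^3) \<Rightarrow> bool" where
  "unit_speed_R3 I \<gamma> \<longleftrightarrow> smooth_curve_on I \<gamma> \<and> (\<forall>s\<in>I. norm (tang \<gamma> s) = 1)"

definition unit_speed_S3 :: "real set \<Rightarrow> (real \<Rightarrow> real^4) \<Rightarrow> bool" where
  "unit_speed_S3 I \<gamma> \<longleftrightarrow> smooth_curve_on I \<gamma> \<and> (\<forall>s\<in>I. \<gamma> s \<in> S3 \<and> norm (tang \<gamma> s) = 1)"

definition unit_speed_H3 :: "real set \<Rightarrow> (real \<Rightarrow> real^4) \<Rightarrow> bool" where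
  "unit_speed_H3 I \<gamma> \<longleftrightarrow> smooth_curve_on I \<gamma> \<and> (\<forall>s\<in>I. \<gamma> s \<in> H3 \<and> lor (tang \<gamma> s) (tang \<gamma> s) = 1)"

definition conf_traj_R3 :: "real \<Rightarrow> (real^3 \<Rightarrow> real^3) \<Rightarrow> real set \<Rightarrow> (real \<Rightarrow> real^3) \<Rightarrow> bool" where
  "conf_traj_R3 q V I \<gamma> \<longleftrightarrow>
     (\<forall>s\<in>I. covD_R3 (tang \<gamma>) s = q *\<^sub>R cross3 (V (\<gamma> s)) (tang \<gamma> s))"

definition conf_traj_S3 :: "real \<Rightarrow> (real^4 \<Rightarrow> real^4) \<Rightarrow> real set \<Rightarrow> (real \<Rightarrow> real^4) \<Rightarrow> bool" where
  "conf_traj_S3 q V I \<gamma> \<longleftrightarrow>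
     (\<forall>s\<in>I. covD_S3 \<gamma> (tang \<gamma>) s = q *\<^sub>R crossS (\<gamma> s) (V (\<gamma> s)) (tang \<gamma> s))"

definition conf_traj_H3 :: "real \<Rightarrow> (real^4 \<Rightarrow> real^4) \<Rightarrow> real set \<Rightarrow> (real \<Rightarrow> real^4) \<Rightarrow> bool" where
  "conf_traj_H3 q V I \<gamma> \<longleftrightarrow>
     (\<forall>s\<in>I. covD_H3 \<gamma> (tang \<gamma>) s = q *\<^sub>R crossH (\<gamma> s) (V (\<gamma> s)) (tang \<gamma> s))"

end

theory Submission
  imports Defs
begin

text \<open>Write \<open>T\<close> for the unit tangent and \<open>p\<close> for the point of the curve. In all three
  ambient spaces the conformal trajectory equation says that the covariant acceleration is
  \<open>q W\<close> with \<open>W = V \<times> T\<close>, and since the normal component of \<open>V\<close> drops out of the cross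
  product, \<open>W\<close> is \<open>p \<times> T\<close> in \<open>\<real>\<^sup>3\<close> and \<open>det(a, T, \<cdot>, p)\<close> on the space forms. Differentiating,
  the contributions of \<open>T'\<close> along \<open>p\<close> and along \<open>W\<close> cancel in the determinant, leaving
  \<open>W' = q (a \<times> W)\<close>, which is orthogonal to \<open>W\<close>. Hence \<open>\<langle>W, W\<rangle>\<close> is a constant \<open>c > 0\<close>,
  the curvature is \<open>\<bar>q\<bar> \<surd>c\<close>, the principal normal is a constant multiple of \<open>W\<close>, and the
  torsion \<open>\<langle>N', T \<times> N\<rangle>\<close> reduces by the Gram determinant identity to \<open>q \<langle>a, T\<rangle>\<close>.\<close>

section \<open>Cross products in \<open>\<real>\<^sup>4\<close>\<close>

lemma det_4x4:
  "det (A::real^4^4) =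
   A$1$1*A$2$2*A$3$3*A$4$4 - A$1$1*A$2$2*A$3$4*A$4$3 - A$1$1*A$2$3*A$3$2*A$4$4
 + A$1$1*A$2$3*A$3$4*A$4$2 + A$1$1*A$2$4*A$3$2*A$4$3 - A$1$1*A$2$4*A$3$3*A$4$2
 - A$1$2*A$2$1*A$3$3*A$4$4 + A$1$2*A$2$1*A$3$4*A$4$3 + A$1$2*A$2$3*A$3$1*A$4$4
 - A$1$2*A$2$3*A$3$4*A$4$1 - A$1$2*A$2$4*A$3$1*A$4$3 + A$1$2*A$2$4*A$3$3*A$4$1
 + A$1$3*A$2$1*A$3$2*A$4$4 - A$1$3*A$2$1*A$3$4*A$4$2 - A$1$3*A$2$2*A$3$1*A$4$4
 + A$1$3*A$2$2*A$3$4*A$4$1 + A$1$3*A$2$4*A$3$1*A$4$2 - A$1$3*A$2$4*A$3$2*A$4$1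
 - A$1$4*A$2$1*A$3$2*A$4$3 + A$1$4*A$2$1*A$3$3*A$4$2 + A$1$4*A$2$2*A$3$1*A$4$3
 - A$1$4*A$2$2*A$3$3*A$4$1 - A$1$4*A$2$3*A$3$1*A$4$2 + A$1$4*A$2$3*A$3$2*A$4$1"
proof -
  have f1: "finite {2::4, 3, 4}" "1 \<notin> {2::4, 3, 4}"
    and f2: "finite {3::4, 4}" "2 \<notin> {3::4, 4}"
    and f3: "finite {4::4}" "3 \<notin> {4::4}" by auto
  show ?thesis
    unfolding det_def UNIV_4 sum_over_permutations_insert[OF f1]
      sum_over_permutations_insert[OF f2] sum_over_permutations_insert[OF f3] permutes_sing
    by (simp add: sign_swap_id permutation_swap_id permutation_compose sign_compose sign_id
        swap_id_eq algebra_simps)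
qed

lemma det4_expand: "det4 u v w p =
   u$1* v$2*w$3*p$4 - u$1* v$2*w$4*p$3 - u$1* v$3*w$2*p$4
 + u$1* v$3*w$4*p$2 + u$1* v$4*w$2*p$3 - u$1* v$4*w$3*p$2
 - u$2* v$1*w$3*p$4 + u$2* v$1*w$4*p$3 + u$2* v$3*w$1*p$4
 - u$2* v$3*w$4*p$1 - u$2* v$4*w$1*p$3 + u$2* v$4*w$3*p$1
 + u$3* v$1*w$2*p$4 - u$3* v$1*w$4*p$2 - u$3* v$2*w$1*p$4
 + u$3* v$2*w$4*p$1 + u$3* v$4*w$1*p$2 - u$3* v$4*w$2*p$1
 - u$4* v$1*w$2*p$3 + u$4* v$1*w$3*p$2 + u$4* v$2*w$1*p$3
 - u$4* v$2*w$3*p$1 - u$4* v$3*w$1*p$2 + u$4* v$3*w$2*p$1"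
  unfolding det4_def det_4x4 by simp

lemma det4_repeated_column: "det4 u v u p = 0" "det4 u v v p = 0" "det4 u v p p = 0"
  by (simp_all add: det4_expand)

definition cross4 :: "real^4 \<Rightarrow> real^4 \<Rightarrow> real^4 \<Rightarrow> real^4" where
  "cross4 u v p = (\<chi> i. det4 u v (axis i 1) p)"

lemmas cross4_coordinates = cross4_def det4_expand axis_def inner_vec_def sum_4 vec_eq_iff forall_4

lemma inner_cross4: "cross4 u v p \<bullet> w = det4 u v w p"
  by (simp add: cross4_coordinates) algebra

lemma cross4_orthogonal: "cross4 u v p \<bullet> u = 0" "cross4 u v p \<bullet> v = 0" "cross4 u v p \<bullet> p = 0"
  by (simp_all add: inner_cross4 det4_repeated_column)

lemma cross4_shift_first: "cross4 (u + c *\<^sub>R p) v p = cross4 u v p" "cross4 (u - c *\<^sub>R p) v p = cross4 u v p"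
  by (simp_all add: cross4_coordinates) algebra+

lemma cross4_shift_second: "cross4 u (v + p) p = cross4 u v p" "cross4 u (v - p) p = cross4 u v p"
  by (simp_all add: cross4_coordinates algebra_simps)

lemma cross4_scaleR_second: "cross4 u (c *\<^sub>R v) p = c *\<^sub>R cross4 u v p"
  by (simp add: cross4_coordinates) algebra

lemma cross4_same: "cross4 u v v = 0"
  by (simp add: cross4_coordinates)

lemma bounded_bilinear_cross4: "bounded_bilinear (cross4 u)"
proof -
  have "bilinear (cross4 u)"
    unfolding bilinear_def linear_iff by (simp add: cross4_coordinates; intro conjI allI; algebra)
  then show ?thesis by (simp add: bilinear_conv_bounded_bilinear)
qed

lemma inner_cross4_cross4: "cross4 u v p \<bullet> cross4 u' v' p' =
   (u\<bullet>u')*(v\<bullet>v')*(p\<bullet>p') + (u\<bullet>v')*(v\<bullet>p')*(p\<bullet>u') + (u\<bullet>p')*(v\<bullet>u')*(p\<bullet>v')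
 - (u\<bullet>u')*(v\<bullet>p')*(p\<bullet>v') - (u\<bullet>v')*(v\<bullet>u')*(p\<bullet>p') - (u\<bullet>p')*(v\<bullet>v')*(p\<bullet>u')"
  by (simp add: cross4_coordinates) algebra

lemma crossS_eq_cross4: "crossS p u v = cross4 u v p"
  unfolding crossS_def
proof (rule the_equality)
  show "cross4 u v p \<bullet> p = 0 \<and> (\<forall>w. w \<bullet> p = 0 \<longrightarrow> cross4 u v p \<bullet> w = det4 u v w p)"
    by (simp add: inner_cross4 det4_repeated_column)
next
  fix x assume x: "x \<bullet> p = 0 \<and> (\<forall>w. w \<bullet> p = 0 \<longrightarrow> x \<bullet> w = det4 u v w p)"
  define d where "d = x - cross4 u v p"
  have "d \<bullet> p = 0" using x by (simp add: d_def inner_diff_left cross4_orthogonal)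
  then have "x \<bullet> d = cross4 u v p \<bullet> d" using x by (simp add: inner_cross4)
  then have "d \<bullet> d = 0" by (simp add: d_def inner_diff_left)
  then show "x = cross4 u v p" by (simp add: d_def)
qed

section \<open>The Lorentzian form\<close>

lemma lor_commute: "lor x y = lor y x"
  by (simp add: lor_def algebra_simps)

lemma lor_simps:
  "lor (x + y) z = lor x z + lor y z" "lor z (x + y) = lor z x + lor z y"
  "lor (x - y) z = lor x z - lor y z" "lor z (x - y) = lor z x - lor z y"
  "lor (c *\<^sub>R x) z = c * lor x z" "lor z (c *\<^sub>R x) = c * lor z x"
  "lor (-x) z = - lor x z" "lor z (-x) = - lor z x"
  by (simp_all add: lor_def algebra_simps)

lemma bounded_bilinear_lor: "bounded_bilinear lor"
proof -
  have "bilinear lor" unfolding bilinear_def linear_iff by (simp add: lor_simps)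
  then show ?thesis by (simp add: bilinear_conv_bounded_bilinear)
qed

text \<open>The Gram matrix \<open>diag(1,1,1,-1)\<close> of \<open>lor\<close>; it turns Euclidean duals into Lorentzian ones.\<close>

definition time_flip :: "real^4 \<Rightarrow> real^4" where
  "time_flip v = (\<chi> i. if i = 4 then - v$i else v$i)"

lemma lor_time_flip: "lor (time_flip x) w = x \<bullet> w" "lor (time_flip x) (time_flip y) = lor x y"
  "lor x (time_flip x) = x \<bullet> x"
  by (simp_all add: lor_def time_flip_def inner_vec_def sum_4)

lemma linear_time_flip: "linear time_flip"
  by (simp add: linear_iff time_flip_def vec_eq_iff)

lemma lor_cross4_cross4: "lor (cross4 u v p) (cross4 u' v' p') =
 - (lor u u'*lor v v'*lor p p' + lor u v'*lor v p'*lor p u' + lor u p'*lor v u'*lor p v'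
 - lor u u'*lor v p'*lor p v' - lor u v'*lor v u'*lor p p' - lor u p'*lor v v'*lor p u')"
  by (simp add: cross4_coordinates lor_def) algebra

lemma crossH_eq_time_flip_cross4:
  assumes "lor p p \<noteq> 0"
  shows "crossH p u v = time_flip (cross4 u v p)"
  unfolding crossH_def
proof (rule the_equality)
  show "lor (time_flip (cross4 u v p)) p = 0 \<and>
      (\<forall>w. lor w p = 0 \<longrightarrow> lor (time_flip (cross4 u v p)) w = det4 u v w p)"
    by (simp add: lor_time_flip inner_cross4 det4_repeated_column)
next
  fix x assume x: "lor x p = 0 \<and> (\<forall>w. lor w p = 0 \<longrightarrow> lor x w = det4 u v w p)"
  define d where "d = x - time_flip (cross4 u v p)"
  have dp: "lor d p = 0" using x by (simp add: d_def lor_simps lor_time_flip cross4_orthogonal)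
  txt \<open>As \<open>p\<close> is not null, \<open>\<real>\<^sup>4 = \<real>p \<oplus> p\<^sup>\<bottom>\<close>, so \<open>d\<close> is Lorentz-orthogonal to everything.\<close>
  have "lor d w = 0" for w
  proof -
    define w' where "w' = w - (lor w p / lor p p) *\<^sub>R p"
    have "lor w' p = 0" using assms by (simp add: w'_def lor_simps)
    then have "lor d w' = 0" using x by (simp add: d_def lor_simps lor_time_flip inner_cross4)
    then show ?thesis using dp by (simp add: w'_def lor_simps)
  qed
  from this[of "time_flip d"] have "d \<bullet> d = 0" by (simp add: lor_commute[of d] lor_time_flip)
  then show "x = time_flip (cross4 u v p)" by (simp add: d_def)
qed

lemma lor_self_pos_if_orthogonal_timelike:
  assumes wp: "lor w p = 0" and pp: "lor p p = -1" and "w \<noteq> 0"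
  shows "lor w w > 0"
proof -
  define S where "S = (w$1)\<^sup>2 + (w$2)\<^sup>2 + (w$3)\<^sup>2"
  define P where "P = (p$1)\<^sup>2 + (p$2)\<^sup>2 + (p$3)\<^sup>2"
  have p4: "(p$4)\<^sup>2 = 1 + P" using pp by (simp add: lor_def P_def power2_eq_square)
  have "w$4 * p$4 = w$1*p$1 + w$2*p$2 + w$3*p$3" using wp by (simp add: lor_def)
  moreover have "S * P - (w$1*p$1 + w$2*p$2 + w$3*p$3)\<^sup>2
      = (w$1*p$2 - w$2*p$1)\<^sup>2 + (w$1*p$3 - w$3*p$1)\<^sup>2 + (w$2*p$3 - w$3*p$2)\<^sup>2"
    by (simp add: S_def P_def) algebra
  ultimately have cauchy_schwarz: "(w$4 * p$4)\<^sup>2 \<le> S * P"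
    by (smt (verit) sum_power2_ge_zero zero_le_power2)
  have lw: "lor w w = S - (w$4)\<^sup>2" by (simp add: lor_def S_def power2_eq_square)
  have S_pos: "S > 0"
  proof (rule ccontr)
    assume "\<not> S > 0"
    moreover have "S \<ge> 0" "P \<ge> 0" by (simp_all add: S_def P_def)
    ultimately have "S = 0" by simp
    then have "w$1 = 0" "w$2 = 0" "w$3 = 0" unfolding S_def
      by (smt (verit) zero_le_power2 zero_eq_power2)+
    moreover have "w$4 * p$4 = 0" using cauchy_schwarz \<open>S = 0\<close> by simp
    moreover have "p$4 \<noteq> 0" using p4 \<open>P \<ge> 0\<close> by auto
    ultimately show False using \<open>w \<noteq> 0\<close> by (simp add: vec_eq_iff forall_4)
  qed
  have "lor w w * (p$4)\<^sup>2 = S + (S * P - (w$4 * p$4)\<^sup>2)"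
    by (simp add: lw p4 algebra_simps)
  then have "lor w w * (p$4)\<^sup>2 > 0" using cauchy_schwarz S_pos by linarith
  then show ?thesis by (simp add: zero_less_mult_iff)
qed

section \<open>Derivatives along curves\<close>

lemma smooth_curve_on_has_vector_derivative:
  fixes \<gamma> :: "real \<Rightarrow> 'a::real_normed_vector"
  assumes "smooth_curve_on I \<gamma>" "open I" "s \<in> I"
  shows "(\<gamma> has_vector_derivative tang \<gamma> s) (at s)"
    "(tang \<gamma> has_vector_derivative vector_derivative (tang \<gamma>) (at s)) (at s)"
proof -
  obtain D where D0: "D 0 = \<gamma>"
    and D: "\<And>n s. s \<in> I \<Longrightarrow> (D n has_vector_derivative D (Suc n) s) (at s)"
    using assms(1) unfolding smooth_curve_on_def by blast
  have tang: "tang \<gamma> x = D 1 x" if "x \<in> I" for x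
    using D[OF that, of 0] D0 by (simp add: tang_def vector_derivative_at)
  show "(\<gamma> has_vector_derivative tang \<gamma> s) (at s)"
    using D[OF assms(3), of 0] D0 tang[OF assms(3)] by simp
  have "(tang \<gamma> has_vector_derivative D 2 s) (at s)"
    using has_vector_derivative_transform_within_open[OF D[OF assms(3), of 1] assms(2,3)] tang
    by (simp add: numeral_2_eq_2)
  then show "(tang \<gamma> has_vector_derivative vector_derivative (tang \<gamma>) (at s)) (at s)"
    by (simp add: vector_derivative_at)
qed

lemma bilinear_const_on_deriv_eq_zero:
  assumes B: "bounded_bilinear B" and I: "open I" "s \<in> I"
    and f: "(f has_vector_derivative f') (at s)" and g: "(g has_vector_derivative g') (at s)"
    and const: "\<And>x. x \<in> I \<Longrightarrow> B (f x) (g x) = c"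
  shows "B (f s) g' + B f' (g s) = 0"
proof -
  have "((\<lambda>x. B (f x) (g x)) has_vector_derivative 0) (at s)"
    by (rule has_vector_derivative_transform_within_open[OF has_vector_derivative_const I])
      (simp add: const)
  moreover have "((\<lambda>x. B (f x) (g x)) has_vector_derivative B (f s) g' + B f' (g s)) (at s)"
    by (rule bounded_bilinear.has_vector_derivative[OF B f g])
  ultimately show ?thesis by (metis vector_derivative_unique_at)
qed

lemma bilinear_self_const_on_interval:
  assumes B: "bounded_bilinear B" and sym: "\<And>x y. B x y = B y x" and I: "is_interval I"
    and f: "\<And>s. s \<in> I \<Longrightarrow> (f has_vector_derivative f' s) (at s)"
    and orth: "\<And>s. s \<in> I \<Longrightarrow> B (f s) (f' s) = 0"
  shows "\<exists>c. \<forall>s\<in>I. B (f s) (f s) = c"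
proof -
  have "((\<lambda>s. B (f s) (f s)) has_vector_derivative 0) (at s within I)" if "s \<in> I" for s
  proof -
    have f_within: "(f has_vector_derivative f' s) (at s within I)"
      using f[OF that] by (rule has_vector_derivative_at_within)
    have "((\<lambda>s. B (f s) (f s)) has_vector_derivative B (f s) (f' s) + B (f' s) (f s)) (at s within I)"
      by (rule bounded_bilinear.has_vector_derivative[OF B f_within f_within])
    moreover have "B (f s) (f' s) + B (f' s) (f s) = 0"
      using orth[OF that] sym[of "f' s" "f s"] by simp
    ultimately show ?thesis by simp
  qed
  then show ?thesis
    using has_vector_derivative_zero_constant[OF is_interval_convex[OF I], of "\<lambda>s. B (f s) (f s)"]
    by metis
qed

lemma has_vector_derivative_scaleR_on_open:
  assumes "(f has_vector_derivative f') (at s)" "open I" "s \<in> I" "\<And>x. x \<in> I \<Longrightarrow> g x = c *\<^sub>R f x"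
  shows "(g has_vector_derivative c *\<^sub>R f') (at s)"
  using has_vector_derivative_transform_within_open
      [OF bounded_linear.has_vector_derivative[OF bounded_linear_scaleR_right assms(1)] assms(2,3)]
    assms(4) by simp

section \<open>Conformal trajectories\<close>

context includes cross3_syntax
begin

lemma bounded_bilinear_cross3: "bounded_bilinear cross3"
  using bilinear_cross by (simp add: bilinear_conv_bounded_bilinear)

lemma inner_cross3_cross3: "(a \<times> b) \<bullet> (c \<times> d) = (a \<bullet> c) * (b \<bullet> d) - (a \<bullet> d) * (b \<bullet> c)"
  by (simp add: cross3_simps)

lemma conf_traj_R3_position_deriv:
  assumes "unit_speed_R3 I \<gamma>" "open I" "conf_traj_R3 q (\<lambda>p. p) I \<gamma>" "s \<in> I"
  shows "((\<lambda>s. \<gamma> s \<times> tang \<gamma> s) has_vector_derivative q *\<^sub>R (\<gamma> s \<times> (\<gamma> s \<times> tang \<gamma> s))) (at s)"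
proof -
  have "smooth_curve_on I \<gamma>" using assms(1) by (simp add: unit_speed_R3_def)
  note \<gamma>' = smooth_curve_on_has_vector_derivative[OF this assms(2,4)]
  have "vector_derivative (tang \<gamma>) (at s) = q *\<^sub>R (\<gamma> s \<times> tang \<gamma> s)"
    using assms(3,4) by (simp add: conf_traj_R3_def covD_R3_def)
  with bounded_bilinear.has_vector_derivative[OF bounded_bilinear_cross3 \<gamma>'] show ?thesis
    by (simp add: cross_mult_right)
qed

lemma conf_traj_R3_position_frenet:
  fixes \<gamma> :: "real \<Rightarrow> real^3"
  assumes q: "q \<noteq> 0" and I: "open I" "is_interval I" and us: "unit_speed_R3 I \<gamma>"
    and ng: "\<not> (\<forall>s\<in>I. covD_R3 (tang \<gamma>) s = 0)" and ct: "conf_traj_R3 q (\<lambda>p. p) I \<gamma>"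
  shows "(\<exists>c. \<forall>s\<in>I. curv_R3 \<gamma> s = c) \<and> (\<forall>s\<in>I. tors_R3 \<gamma> s = q * (\<gamma> s \<bullet> tang \<gamma> s))"
proof -
  define T where "T = tang \<gamma>"
  define W where "W s = \<gamma> s \<times> T s" for s
  have acc: "covD_R3 T s = q *\<^sub>R W s" if "s \<in> I" for s
    using ct that by (simp add: conf_traj_R3_def T_def W_def)
  have W': "(W has_vector_derivative q *\<^sub>R (\<gamma> s \<times> W s)) (at s)" if "s \<in> I" for s
    using conf_traj_R3_position_deriv[OF us I(1) ct that] by (simp add: W_def[abs_def] T_def)
  have W'_orth: "W s \<bullet> q *\<^sub>R (\<gamma> s \<times> W s) = 0" for s
    by (simp add: dot_cross_self)
  have "\<exists>c. \<forall>s\<in>I. W s \<bullet> W s = c"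
    by (rule bilinear_self_const_on_interval[OF bounded_bilinear_inner inner_commute I(2) W' W'_orth])
  then obtain c where c: "\<And>s. s \<in> I \<Longrightarrow> W s \<bullet> W s = c" by blast
  define k where "k = \<bar>q\<bar> * sqrt c"
  have curv: "curv_R3 \<gamma> s = k" if "s \<in> I" for s
    using acc[OF that] c[OF that]
    by (simp add: curv_R3_def T_def[symmetric] k_def norm_eq_sqrt_inner real_sqrt_mult)
  obtain s0 where s0: "s0 \<in> I" "covD_R3 T s0 \<noteq> 0" using ng by (auto simp: T_def)
  then have "k \<noteq> 0" using curv[OF s0(1)] unfolding curv_R3_def T_def by auto
  then have c0: "c > 0"
    using c[OF s0(1)] inner_ge_zero[of "W s0"] by (simp add: k_def)
  have kk: "k * k = q * q * c"
    using c0 by (simp add: k_def algebra_simps abs_mult_self_eq)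
  have N: "normal_R3 \<gamma> s = (q / k) *\<^sub>R W s" if "s \<in> I" for s
    using acc[OF that] curv[OF that] by (simp add: normal_R3_def T_def[symmetric])
  have tors: "tors_R3 \<gamma> s = q * (\<gamma> s \<bullet> T s)" if s: "s \<in> I" for s
  proof -
    have "tors_R3 \<gamma> s = ((q / k) *\<^sub>R (q *\<^sub>R (\<gamma> s \<times> W s))) \<bullet> (T s \<times> ((q / k) *\<^sub>R W s))"
      using vector_derivative_at[OF has_vector_derivative_scaleR_on_open[OF W'[OF s] I(1) s N]] N[OF s]
      by (simp add: tors_R3_def covD_R3_def binormal_R3_def T_def)
    also have "\<dots> = (q*q*q / (k*k)) * ((\<gamma> s \<times> W s) \<bullet> (T s \<times> W s))"
      by (simp add: cross_mult_right)
    also have "\<dots> = (q*q*q / (k*k)) * ((\<gamma> s \<bullet> T s) * c)"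
      using c[OF s] dot_cross_self(1)[of "\<gamma> s" "T s"] by (simp add: inner_cross3_cross3 W_def[symmetric])
    also have "\<dots> = q * (\<gamma> s \<bullet> T s)" using kk c0 q by (simp add: field_simps)
    finally show ?thesis .
  qed
  with curv show ?thesis unfolding T_def by blast
qed

end

lemma unit_speed_S3_frame:
  assumes us: "unit_speed_S3 I \<gamma>" and I: "open I" "s \<in> I"
  shows "\<gamma> s \<bullet> \<gamma> s = 1" "\<gamma> s \<bullet> tang \<gamma> s = 0"
    "covD_S3 \<gamma> (tang \<gamma>) s = vector_derivative (tang \<gamma>) (at s) + \<gamma> s"
proof -
  have sm: "smooth_curve_on I \<gamma>" using us by (simp add: unit_speed_S3_def)
  note \<gamma>' = smooth_curve_on_has_vector_derivative[OF sm I]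
  have gg: "\<gamma> x \<bullet> \<gamma> x = 1" if "x \<in> I" for x
    using us that by (simp add: unit_speed_S3_def S3_def norm_eq_1)
  have gT: "\<gamma> x \<bullet> tang \<gamma> x = 0" if "x \<in> I" for x
  proof -
    note \<gamma>'x = smooth_curve_on_has_vector_derivative(1)[OF sm I(1) that]
    have "\<gamma> x \<bullet> tang \<gamma> x + tang \<gamma> x \<bullet> \<gamma> x = 0"
      by (rule bilinear_const_on_deriv_eq_zero[OF bounded_bilinear_inner I(1) that \<gamma>'x \<gamma>'x gg])
    then show ?thesis by (simp add: inner_commute)
  qed
  have "\<gamma> s \<bullet> vector_derivative (tang \<gamma>) (at s) + tang \<gamma> s \<bullet> tang \<gamma> s = 0"
    by (rule bilinear_const_on_deriv_eq_zero[OF bounded_bilinear_inner I \<gamma>' gT])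
  then have "vector_derivative (tang \<gamma>) (at s) \<bullet> \<gamma> s = -1"
    using us I(2) by (simp add: unit_speed_S3_def norm_eq_1 inner_commute)
  then show "covD_S3 \<gamma> (tang \<gamma>) s = vector_derivative (tang \<gamma>) (at s) + \<gamma> s"
    by (simp add: covD_S3_def)
  show "\<gamma> s \<bullet> \<gamma> s = 1" "\<gamma> s \<bullet> tang \<gamma> s = 0" using gg gT I(2) by auto
qed

text \<open>The fields \<open>a \<mp> \<langle>a, p\<rangle> p\<close> on \<open>S\<^sup>3\<close> and \<open>H\<^sup>3\<close> are the gradients of the height function
  \<open>\<langle>a, \<cdot>\<rangle>\<close>; their normal component drops out of the cross product.\<close>

lemma conf_traj_S3_height_deriv:
  assumes us: "unit_speed_S3 I \<gamma>" and I: "open I" "s \<in> I"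
    and ct: "conf_traj_S3 q (\<lambda>p. a - (a \<bullet> p) *\<^sub>R p) I \<gamma>"
  shows "covD_S3 \<gamma> (tang \<gamma>) s = q *\<^sub>R cross4 a (tang \<gamma> s) (\<gamma> s)"
    "((\<lambda>s. cross4 a (tang \<gamma> s) (\<gamma> s)) has_vector_derivative
        q *\<^sub>R cross4 a (cross4 a (tang \<gamma> s) (\<gamma> s)) (\<gamma> s)) (at s)"
proof -
  show acc: "covD_S3 \<gamma> (tang \<gamma>) s = q *\<^sub>R cross4 a (tang \<gamma> s) (\<gamma> s)"
    using ct I(2) by (simp add: conf_traj_S3_def crossS_eq_cross4 cross4_shift_first)
  have sm: "smooth_curve_on I \<gamma>" using us by (simp add: unit_speed_S3_def)
  note \<gamma>' = smooth_curve_on_has_vector_derivative[OF sm I]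
  have "vector_derivative (tang \<gamma>) (at s) = q *\<^sub>R cross4 a (tang \<gamma> s) (\<gamma> s) - \<gamma> s"
    using acc unit_speed_S3_frame(3)[OF us I] by (simp add: algebra_simps)
  with bounded_bilinear.has_vector_derivative[OF bounded_bilinear_cross4 \<gamma>'(2) \<gamma>'(1)]
  show "((\<lambda>s. cross4 a (tang \<gamma> s) (\<gamma> s)) has_vector_derivative
        q *\<^sub>R cross4 a (cross4 a (tang \<gamma> s) (\<gamma> s)) (\<gamma> s)) (at s)"
    by (simp add: cross4_same cross4_shift_second cross4_scaleR_second)
qed

lemma conf_traj_S3_height_frenet:
  fixes \<gamma> :: "real \<Rightarrow> real^4" and a :: "real^4"
  assumes q: "q \<noteq> 0" and I: "open I" "is_interval I" and us: "unit_speed_S3 I \<gamma>"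
    and ng: "\<not> (\<forall>s\<in>I. covD_S3 \<gamma> (tang \<gamma>) s = 0)"
    and ct: "conf_traj_S3 q (\<lambda>p. a - (a \<bullet> p) *\<^sub>R p) I \<gamma>"
  shows "(\<exists>c. \<forall>s\<in>I. curv_S3 \<gamma> s = c) \<and> (\<forall>s\<in>I. tors_S3 \<gamma> s = q * (a \<bullet> tang \<gamma> s))"
proof -
  define T where "T = tang \<gamma>"
  define W where "W s = cross4 a (T s) (\<gamma> s)" for s
  note frame = unit_speed_S3_frame[OF us I(1), folded T_def]
  have acc: "covD_S3 \<gamma> T s = q *\<^sub>R W s" if "s \<in> I" for s
    using conf_traj_S3_height_deriv(1)[OF us I(1) that ct] by (simp add: T_def W_def)
  have W': "(W has_vector_derivative q *\<^sub>R cross4 a (W s) (\<gamma> s)) (at s)" if "s \<in> I" for s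
    using conf_traj_S3_height_deriv(2)[OF us I(1) that ct] by (simp add: W_def[abs_def] T_def)
  have W'_orth: "W s \<bullet> q *\<^sub>R cross4 a (W s) (\<gamma> s) = 0" for s
    by (simp add: inner_commute[of "W s"] cross4_orthogonal)
  have "\<exists>c. \<forall>s\<in>I. W s \<bullet> W s = c"
    by (rule bilinear_self_const_on_interval[OF bounded_bilinear_inner inner_commute I(2) W' W'_orth])
  then obtain c where c: "\<And>s. s \<in> I \<Longrightarrow> W s \<bullet> W s = c" by blast
  define k where "k = \<bar>q\<bar> * sqrt c"
  have curv: "curv_S3 \<gamma> s = k" if "s \<in> I" for s
    using acc[OF that] c[OF that]
    by (simp add: curv_S3_def T_def[symmetric] k_def norm_eq_sqrt_inner real_sqrt_mult)
  obtain s0 where s0: "s0 \<in> I" "covD_S3 \<gamma> T s0 \<noteq> 0" using ng by (auto simp: T_def)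
  then have "k \<noteq> 0" using curv[OF s0(1)] unfolding curv_S3_def T_def by auto
  then have c0: "c > 0"
    using c[OF s0(1)] inner_ge_zero[of "W s0"] by (simp add: k_def)
  have kk: "k * k = q * q * c"
    using c0 by (simp add: k_def algebra_simps abs_mult_self_eq)
  have N: "normal_S3 \<gamma> s = (q / k) *\<^sub>R W s" if "s \<in> I" for s
    using acc[OF that] curv[OF that] by (simp add: normal_S3_def T_def[symmetric])
  have tors: "tors_S3 \<gamma> s = q * (a \<bullet> T s)" if s: "s \<in> I" for s
  proof -
    have "tors_S3 \<gamma> s = ((q / k) *\<^sub>R (q *\<^sub>R cross4 a (W s) (\<gamma> s))) \<bullet> cross4 (T s) ((q / k) *\<^sub>R W s) (\<gamma> s)"
      using vector_derivative_at[OF has_vector_derivative_scaleR_on_open[OF W'[OF s] I(1) s N]] N[OF s]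
      by (simp add: tors_S3_def covD_S3_def binormal_S3_def T_def crossS_eq_cross4 cross4_orthogonal)
    also have "\<dots> = (q*q*q / (k*k)) * (cross4 a (W s) (\<gamma> s) \<bullet> cross4 (T s) (W s) (\<gamma> s))"
      by (simp add: cross4_scaleR_second)
    also have "\<dots> = (q*q*q / (k*k)) * ((a \<bullet> T s) * c)"
      using c[OF s] frame[OF s] cross4_orthogonal[of a "T s" "\<gamma> s"]
      by (simp add: inner_cross4_cross4 W_def inner_commute)
    also have "\<dots> = q * (a \<bullet> T s)" using kk c0 q by (simp add: field_simps)
    finally show ?thesis .
  qed
  with curv show ?thesis unfolding T_def by blast
qed

lemma unit_speed_H3_frame:
  assumes us: "unit_speed_H3 I \<gamma>" and I: "open I" "s \<in> I"
  shows "lor (\<gamma> s) (\<gamma> s) = -1" "lor (\<gamma> s) (tang \<gamma> s) = 0"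
    "covD_H3 \<gamma> (tang \<gamma>) s = vector_derivative (tang \<gamma>) (at s) - \<gamma> s"
proof -
  have sm: "smooth_curve_on I \<gamma>" using us by (simp add: unit_speed_H3_def)
  note \<gamma>' = smooth_curve_on_has_vector_derivative[OF sm I]
  have gg: "lor (\<gamma> x) (\<gamma> x) = -1" if "x \<in> I" for x
    using us that by (simp add: unit_speed_H3_def H3_def)
  have gT: "lor (\<gamma> x) (tang \<gamma> x) = 0" if "x \<in> I" for x
  proof -
    note \<gamma>'x = smooth_curve_on_has_vector_derivative(1)[OF sm I(1) that]
    have "lor (\<gamma> x) (tang \<gamma> x) + lor (tang \<gamma> x) (\<gamma> x) = 0"
      by (rule bilinear_const_on_deriv_eq_zero[OF bounded_bilinear_lor I(1) that \<gamma>'x \<gamma>'x gg])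
    then show ?thesis by (simp add: lor_commute)
  qed
  have "lor (\<gamma> s) (vector_derivative (tang \<gamma>) (at s)) + lor (tang \<gamma> s) (tang \<gamma> s) = 0"
    by (rule bilinear_const_on_deriv_eq_zero[OF bounded_bilinear_lor I \<gamma>' gT])
  then have "lor (vector_derivative (tang \<gamma>) (at s)) (\<gamma> s) = -1"
    using us I(2) by (simp add: unit_speed_H3_def lor_commute)
  then show "covD_H3 \<gamma> (tang \<gamma>) s = vector_derivative (tang \<gamma>) (at s) - \<gamma> s"
    by (simp add: covD_H3_def)
  show "lor (\<gamma> s) (\<gamma> s) = -1" "lor (\<gamma> s) (tang \<gamma> s) = 0" using gg gT I(2) by auto
qed

lemma conf_traj_H3_height_deriv:
  assumes us: "unit_speed_H3 I \<gamma>" and I: "open I" "s \<in> I"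
    and ct: "conf_traj_H3 q (\<lambda>p. a + lor a p *\<^sub>R p) I \<gamma>"
  shows "covD_H3 \<gamma> (tang \<gamma>) s = q *\<^sub>R time_flip (cross4 a (tang \<gamma> s) (\<gamma> s))"
    "((\<lambda>s. time_flip (cross4 a (tang \<gamma> s) (\<gamma> s))) has_vector_derivative
        q *\<^sub>R time_flip (cross4 a (time_flip (cross4 a (tang \<gamma> s) (\<gamma> s))) (\<gamma> s))) (at s)"
proof -
  have "lor (\<gamma> s) (\<gamma> s) \<noteq> 0" using unit_speed_H3_frame(1)[OF us I] by simp
  then show acc: "covD_H3 \<gamma> (tang \<gamma>) s = q *\<^sub>R time_flip (cross4 a (tang \<gamma> s) (\<gamma> s))"
    using ct I(2) by (simp add: conf_traj_H3_def crossH_eq_time_flip_cross4 cross4_shift_first)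
  have sm: "smooth_curve_on I \<gamma>" using us by (simp add: unit_speed_H3_def)
  note \<gamma>' = smooth_curve_on_has_vector_derivative[OF sm I]
  have "vector_derivative (tang \<gamma>) (at s) = q *\<^sub>R time_flip (cross4 a (tang \<gamma> s) (\<gamma> s)) + \<gamma> s"
    using acc unit_speed_H3_frame(3)[OF us I] by (simp add: algebra_simps)
  with bounded_linear.has_vector_derivative[OF linear_time_flip[THEN linear_conv_bounded_linear[THEN iffD1]]
      bounded_bilinear.has_vector_derivative[OF bounded_bilinear_cross4 \<gamma>'(2) \<gamma>'(1)]]
  show "((\<lambda>s. time_flip (cross4 a (tang \<gamma> s) (\<gamma> s))) has_vector_derivative
        q *\<^sub>R time_flip (cross4 a (time_flip (cross4 a (tang \<gamma> s) (\<gamma> s))) (\<gamma> s))) (at s)"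
    by (simp add: cross4_same cross4_shift_second cross4_scaleR_second linear_scale[OF linear_time_flip])
qed

lemma conf_traj_H3_height_frenet:
  fixes \<gamma> :: "real \<Rightarrow> real^4" and a :: "real^4"
  assumes q: "q \<noteq> 0" and I: "open I" "is_interval I" and us: "unit_speed_H3 I \<gamma>"
    and ng: "\<not> (\<forall>s\<in>I. covD_H3 \<gamma> (tang \<gamma>) s = 0)"
    and ct: "conf_traj_H3 q (\<lambda>p. a + lor a p *\<^sub>R p) I \<gamma>"
  shows "(\<exists>c. \<forall>s\<in>I. curv_H3 \<gamma> s = c) \<and> (\<forall>s\<in>I. tors_H3 \<gamma> s = q * lor a (tang \<gamma> s))"
proof -
  define T where "T = tang \<gamma>"
  define W where "W s = time_flip (cross4 a (T s) (\<gamma> s))" for s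
  define Y where "Y s = cross4 a (W s) (\<gamma> s)" for s
  note frame = unit_speed_H3_frame[OF us I(1), folded T_def]
  have acc: "covD_H3 \<gamma> T s = q *\<^sub>R W s" if "s \<in> I" for s
    using conf_traj_H3_height_deriv(1)[OF us I(1) that ct] by (simp add: T_def W_def)
  have W': "(W has_vector_derivative q *\<^sub>R time_flip (Y s)) (at s)" if "s \<in> I" for s
    using conf_traj_H3_height_deriv(2)[OF us I(1) that ct] by (simp add: W_def[abs_def] Y_def T_def)
  have W_orth: "lor (W s) (\<gamma> s) = 0" "lor (W s) (T s) = 0" for s
    by (simp_all add: W_def lor_time_flip cross4_orthogonal)
  have W'_orth: "lor (W s) (q *\<^sub>R time_flip (Y s)) = 0" for s
    by (simp add: lor_simps lor_commute[of "W s"] lor_time_flip Y_def cross4_orthogonal)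
  have "\<exists>c. \<forall>s\<in>I. lor (W s) (W s) = c"
    by (rule bilinear_self_const_on_interval[OF bounded_bilinear_lor lor_commute I(2) W' W'_orth])
  then obtain c where c: "\<And>s. s \<in> I \<Longrightarrow> lor (W s) (W s) = c" by blast
  define k where "k = sqrt (q * q * c)"
  have curv: "curv_H3 \<gamma> s = k" if "s \<in> I" for s
    using acc[OF that] c[OF that] by (simp add: curv_H3_def T_def[symmetric] k_def lor_simps)
  obtain s0 where s0: "s0 \<in> I" "covD_H3 \<gamma> T s0 \<noteq> 0" using ng by (auto simp: T_def)
  have "lor (covD_H3 \<gamma> T s0) (\<gamma> s0) = 0" using acc[OF s0(1)] W_orth by (simp add: lor_simps)
  from lor_self_pos_if_orthogonal_timelike[OF this frame(1)[OF s0(1)] s0(2)]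
  have "q * q * c > 0" using acc[OF s0(1)] c[OF s0(1)] by (simp add: lor_simps)
  then have c0: "c > 0" and kk: "k * k = q * q * c" by (auto simp: k_def zero_less_mult_iff)
  have N: "normal_H3 \<gamma> s = (q / k) *\<^sub>R W s" if "s \<in> I" for s
    using acc[OF that] curv[OF that] by (simp add: normal_H3_def T_def[symmetric])
  have tors: "tors_H3 \<gamma> s = q * lor a (T s)" if s: "s \<in> I" for s
  proof -
    have "tors_H3 \<gamma> s =
        lor ((q / k) *\<^sub>R (q *\<^sub>R time_flip (Y s))) (time_flip (cross4 (T s) ((q / k) *\<^sub>R W s) (\<gamma> s)))"
      using vector_derivative_at[OF has_vector_derivative_scaleR_on_open[OF W'[OF s] I(1) s N]] N[OF s]
        frame(1)[OF s]
      by (simp add: tors_H3_def covD_H3_def binormal_H3_def T_def crossH_eq_time_flip_cross4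
          lor_simps lor_time_flip Y_def cross4_orthogonal)
    also have "\<dots> = (q*q*q / (k*k)) * lor (Y s) (cross4 (T s) (W s) (\<gamma> s))"
      by (simp add: cross4_scaleR_second linear_scale[OF linear_time_flip] lor_simps lor_time_flip(2))
    also have "\<dots> = (q*q*q / (k*k)) * (lor a (T s) * c)"
      using c[OF s] frame[OF s] W_orth[of s]
      by (simp add: lor_cross4_cross4 Y_def lor_commute[of "T s"] lor_commute[of "\<gamma> s" "W s"])
    also have "\<dots> = q * lor a (T s)" using kk c0 q by (simp add: field_simps)
    finally show ?thesis .
  qed
  with curv show ?thesis unfolding T_def by blast
qed

theorem mainTheorem3:
  fixes q :: real and I :: "real set"
  assumes "q \<noteq> 0" and "open I" and "is_interval I"
  shows
   "(\<forall>\<gamma> :: real \<Rightarrow> real^3.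
       unit_speed_R3 I \<gamma> \<and> \<not> (\<forall>s\<in>I. covD_R3 (tang \<gamma>) s = 0) \<and>
       conf_traj_R3 q (\<lambda>p. p) I \<gamma>
       \<longrightarrow> (\<exists>c. \<forall>s\<in>I. curv_R3 \<gamma> s = c) \<and>
           (\<forall>s\<in>I. tors_R3 \<gamma> s = q * (\<gamma> s \<bullet> tang \<gamma> s)))
  \<and> (\<forall>(a :: real^4) (\<gamma> :: real \<Rightarrow> real^4).
       a \<noteq> 0 \<and> unit_speed_S3 I \<gamma> \<and> \<not> (\<forall>s\<in>I. covD_S3 \<gamma> (tang \<gamma>) s = 0) \<and>
       conf_traj_S3 q (\<lambda>p. a - (a \<bullet> p) *\<^sub>R p) I \<gamma>
       \<longrightarrow> (\<exists>c. \<forall>s\<in>I. curv_S3 \<gamma> s = c) \<and>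
           (\<forall>s\<in>I. tors_S3 \<gamma> s = q * (a \<bullet> tang \<gamma> s)))
  \<and> (\<forall>(a :: real^4) (\<gamma> :: real \<Rightarrow> real^4).
       a \<noteq> 0 \<and> unit_speed_H3 I \<gamma> \<and> \<not> (\<forall>s\<in>I. covD_H3 \<gamma> (tang \<gamma>) s = 0) \<and>
       conf_traj_H3 q (\<lambda>p. a + lor a p *\<^sub>R p) I \<gamma>
       \<longrightarrow> (\<exists>c. \<forall>s\<in>I. curv_H3 \<gamma> s = c) \<and>
           (\<forall>s\<in>I. tors_H3 \<gamma> s = q * lor a (tang \<gamma> s)))"
  by (auto dest: conf_traj_R3_position_frenet[OF assms] conf_traj_S3_height_frenet[OF assms]
      conf_traj_H3_height_frenet[OF assms])

end
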